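(* Under the standing setup with $\gamma>0$ and $s_1=\dots=s_n=1$ (so Hank's strategy set is $\{1\}$ and Georgia's is $[0,1]$), define $\hat m(1,1)=\chi\gamma+\beta-\beta\lambda-\lambda\gamma$, $\hat m(0,1)=\beta-\lambda\beta+(\lambda+\gamma+\chi-2)\gamma$ and $\hat w(1)=\frac{\lambda+\gamma-1+\sqrt{1-\beta+(\lambda+\gamma+\beta-2)\lambda-\chi\gamma}}{\gamma}$. Then the Nash equilibrium of the zero-sum game (Georgia minimizing $f$, Hank maximizing $f$) is $(0,1)$ if $\hat m(0,1)\ge0$; $(1,1)$ if $\hat m(1,1)\le0$; and $(\hat w(1),1)$ otherwise.
   Context: Standing setup. Fix $n\in\mathbb N$ and $W=[w_{ij}]\in\mathbb R^{n\times n}$ with $w_{ij}\ge0$, $w_{ii}=0$. Let $\|W\|_\infty=\max_i\sum_j|w_{ij}|$, $\|W\|_1=\max_j\sum_i|w_{ij}|$, let $\lambda$ be the spectral radius of $W$, and assume there is $c\in\mathbb R^n$ with all entries positive and $W^\top c=\lambda c$. Fix $\beta\ge\gamma\ge0$ with $1-\max\{\|W\|_\infty,\|W\|_1\}>\max\{2\beta,4\gamma\}$. Fix innate opinions $s\in[0,1]^n$, $\overline s=\max_is_i$, $\underline s=\min_is_i$; Georgia chooses $g\in[0,\underline s]$, Hank chooses $h\in[\overline s,1]$. Set $\widehat c_i=c_i/\sum_jc_j$, $\widehat s=\sum_i\widehat c_is_i$, $\chi=\sum_i\widehat c_is_i\sum_jw_{ij}$. Define $$f(g,h)=\frac{(1-2\beta+(h-g)\gamma)\widehat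 s-\chi+(h+g)\beta+(g^2-h^2)\gamma}{1-\lambda+(g-h)\gamma}\,c^\top\mathbf 1$$ (the centrality-weighted steady state of the opinion dynamics with source opinions $g,h$). *)

theory Defs
  imports "Jordan_Normal_Form.Spectral_Radius"
begin

definition norm_inf_mat :: "nat \<Rightarrow> real mat \<Rightarrow> real" where
  "norm_inf_mat n W = Max ((\<lambda>i. \<Sum>j<n. \<bar>W $$ (i,j)\<bar>) ` {..<n})"

definition norm_one_mat :: "nat \<Rightarrow> real mat \<Rightarrow> real" where
  "norm_one_mat n W = Max ((\<lambda>j. \<Sum>i<n. \<bar>W $$ (i,j)\<bar>) ` {..<n})"

definition steady_f :: "nat \<Rightarrow> real mat \<Rightarrow> real vec \<Rightarrow> real \<Rightarrow> real \<Rightarrow> real \<Rightarrow> real vec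
    \<Rightarrow> real \<Rightarrow> real \<Rightarrow> real" where
  "steady_f n W c lam \<beta> \<gamma> s g h =
    (let C = (\<Sum>j<n. c $ j);
         chat = (\<lambda>i. c $ i / C);
         shat = (\<Sum>i<n. chat i * s $ i);
         chi = (\<Sum>i<n. chat i * s $ i * (\<Sum>j<n. W $$ (i,j)))
     in ((1 - 2*\<beta> + (h - g)*\<gamma>) * shat - chi + (h + g)*\<beta> + (g^2 - h^2)*\<gamma>)
        / (1 - lam + (g - h)*\<gamma>) * C)"

definition chi_val :: "nat \<Rightarrow> real mat \<Rightarrow> real vec \<Rightarrow> real vec \<Rightarrow> real" where
  "chi_val n W c s = (\<Sum>i<n. (c $ i / (\<Sum>j<n. c $ j)) * s $ i * (\<Sum>j<n. W $$ (i,j)))"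

definition nash_eq :: "(real \<Rightarrow> real \<Rightarrow> real) \<Rightarrow> real set \<Rightarrow> real set \<Rightarrow> real \<times> real \<Rightarrow> bool" where
  "nash_eq f G H p \<longleftrightarrow> fst p \<in> G \<and> snd p \<in> H \<and>
     (\<forall>g\<in>G. f (fst p) (snd p) \<le> f g (snd p)) \<and>
     (\<forall>h\<in>H. f (fst p) h \<le> f (fst p) (snd p))"

end

theory Submission
  imports Defs
begin

text \<open>Since the centrality weights form a positive left eigenvector of W, the centrality-weighted
  row sum of W is the spectral radius, so with all innate opinions equal to 1 we get \<chi> = \<lambda>.
  Hank's only move is 1, and Georgia's payoff becomes a positive affine image of
  t + M/t with t = 1 - \<lambda> - \<gamma> + \<gamma>g and M = (1 - \<lambda>)(1 - \<lambda> - \<beta>). On t \<ge> 1 - \<lambda> - \<gamma> this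
  has the unique minimiser max (1 - \<lambda> - \<gamma>) (sqrt M), which corresponds to g = 0 exactly when
  m(0,1) \<ge> 0 and to g = w(1) otherwise; it stays below g = 1 because M < (1 - \<lambda>)^2.
  The branch m(1,1) \<le> 0 never occurs, as m(1,1) = \<beta>(1 - \<lambda>) > 0.\<close>

lemma left_eigenvector_weighted_row_sums:
  fixes W :: "real mat" and c :: "real vec"
  assumes "W \<in> carrier_mat n n" and "dim_vec c = n"
    and "transpose_mat W *\<^sub>v c = lam \<cdot>\<^sub>v c"
  shows "(\<Sum>i<n. c $ i * (\<Sum>j<n. W $$ (i,j))) = lam * (\<Sum>j<n. c $ j)"
proof -
  have column: "(\<Sum>i<n. W $$ (i,j) * c $ i) = lam * c $ j" if "j < n" for j
  proof -
    have "(transpose_mat W *\<^sub>v c) $ j = lam * c $ j"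
      using assms that by (metis index_smult_vec(1))
    moreover have "(transpose_mat W *\<^sub>v c) $ j = (\<Sum>i<n. W $$ (i,j) * c $ i)"
      using assms(1,2) that by (simp add: scalar_prod_def lessThan_atLeast0)
    ultimately show ?thesis by simp
  qed
  have "(\<Sum>i<n. c $ i * (\<Sum>j<n. W $$ (i,j))) = (\<Sum>j<n. \<Sum>i<n. W $$ (i,j) * c $ i)"
    by (subst sum.swap) (simp add: sum_distrib_left mult.commute)
  also have "\<dots> = (\<Sum>j<n. lam * c $ j)" using column by simp
  finally show ?thesis by (simp add: sum_distrib_left)
qed

lemma positive_left_eigenvalue_le_norm_inf:
  fixes W :: "real mat" and c :: "real vec"
  assumes "n > 0" and W: "W \<in> carrier_mat n n" and W_nonneg: "\<forall>i<n. \<forall>j<n. W $$ (i,j) \<ge> 0"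
    and c: "dim_vec c = n" and c_pos: "\<forall>i<n. c $ i > 0"
    and eig: "transpose_mat W *\<^sub>v c = lam \<cdot>\<^sub>v c"
  shows "lam \<le> norm_inf_mat n W"
proof -
  define C where "C = (\<Sum>j<n. c $ j)"
  have C_pos: "C > 0" unfolding C_def using c_pos \<open>n > 0\<close> by (intro sum_pos) auto
  have row_le: "(\<Sum>j<n. W $$ (i,j)) \<le> norm_inf_mat n W" if "i < n" for i
    using W_nonneg that unfolding norm_inf_mat_def by (intro Max_ge) auto
  have "lam * C = (\<Sum>i<n. c $ i * (\<Sum>j<n. W $$ (i,j)))"
    using left_eigenvector_weighted_row_sums[OF W c eig] by (simp add: C_def)
  also have "\<dots> \<le> (\<Sum>i<n. c $ i * norm_inf_mat n W)"
    using c_pos row_le by (intro sum_mono mult_left_mono) (auto simp: less_imp_le)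
  also have "\<dots> = norm_inf_mat n W * C" unfolding C_def by (simp add: sum_distrib_left mult.commute)
  finally show ?thesis using C_pos by simp
qed

lemma chi_val_unit_opinions:
  fixes W :: "real mat" and c s :: "real vec"
  assumes "n > 0" and "W \<in> carrier_mat n n" and "dim_vec c = n" and c_pos: "\<forall>i<n. c $ i > 0"
    and "transpose_mat W *\<^sub>v c = lam \<cdot>\<^sub>v c" and s_one: "\<forall>i<n. s $ i = 1"
  shows "chi_val n W c s = lam"
proof -
  define C where "C = (\<Sum>j<n. c $ j)"
  have "C > 0" unfolding C_def using c_pos \<open>n > 0\<close> by (intro sum_pos) auto
  have "chi_val n W c s = (\<Sum>i<n. c $ i * (\<Sum>j<n. W $$ (i,j))) / C"
    unfolding chi_val_def C_def[symmetric] using s_one by (simp add: sum_divide_distrib)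
  then show ?thesis
    using left_eigenvector_weighted_row_sums[OF assms(2,3,5)] \<open>C > 0\<close> by (simp add: C_def)
qed

lemma steady_f_unit_opinions:
  fixes n :: nat and W :: "real mat" and c s :: "real vec" and lam \<beta> \<gamma> g :: real
  defines "C \<equiv> \<Sum>j<n. c $ j"
    and "t \<equiv> 1 - lam - \<gamma> + g*\<gamma>"
    and "M \<equiv> (1 - lam) * (1 - lam - \<beta>)"
  assumes "C \<noteq> 0" and s_one: "\<forall>i<n. s $ i = 1" and chi: "chi_val n W c s = lam"
    and "\<gamma> > 0" and "t > 0"
  shows "steady_f n W c lam \<beta> \<gamma> s g 1
           = C * ((t + M / t) / \<gamma> + (\<beta> - \<gamma> - 2 * (1 - lam - \<gamma>)) / \<gamma>)"
proof -
  have shat: "(\<Sum>i<n. c $ i / C * s $ i) = 1"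
    using s_one \<open>C \<noteq> 0\<close> unfolding C_def by (simp add: sum_divide_distrib[symmetric])
  have chi': "(\<Sum>i<n. c $ i / C * s $ i * (\<Sum>j<n. W $$ (i,j))) = lam"
    using chi unfolding chi_val_def C_def by simp
  have numerator: "(1 - 2*\<beta> + (1 - g)*\<gamma>) - lam + (1 + g)*\<beta> + (g^2 - 1)*\<gamma>
          = (t*t + (\<beta> - \<gamma> - 2*(1 - lam - \<gamma>))*t + M) / \<gamma>"
    using \<open>\<gamma> > 0\<close> unfolding t_def M_def
    by (simp add: eq_divide_eq algebra_simps power2_eq_square)
  have denominator: "1 - lam + (g - 1)*\<gamma> = t" unfolding t_def by (simp add: algebra_simps)
  have "(t*t + (\<beta> - \<gamma> - 2*(1 - lam - \<gamma>))*t + M) / \<gamma> / t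
          = (t + M / t) / \<gamma> + (\<beta> - \<gamma> - 2 * (1 - lam - \<gamma>)) / \<gamma>"
    using \<open>t > 0\<close> by (simp add: add_divide_distrib diff_divide_distrib power2_eq_square)
  then show ?thesis
    unfolding steady_f_def Let_def C_def[symmetric] shat chi'
    by (simp add: numerator denominator[simplified])
qed

lemma plus_inverse_unique_min_above:
  fixes M lo t :: real
  assumes "0 < lo" "0 < M" "lo \<le> t" "t \<noteq> max lo (sqrt M)"
  shows "max lo (sqrt M) + M / max lo (sqrt M) < t + M / t"
proof -
  define u where "u = max lo (sqrt M)"
  have "u > 0" "t > 0" using assms unfolding u_def by auto
  have "sqrt M \<le> u" unfolding u_def by simp
  have "M = sqrt M * sqrt M" using \<open>0 < M\<close> by simp
  also have "\<dots> \<le> u * u" using \<open>sqrt M \<le> u\<close> \<open>0 < M\<close> \<open>u > 0\<close> by (intro mult_mono) auto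
  finally have "u * u \<ge> M" .
  have "(t - u) * (t*u - M) > 0"
  proof (cases "t > u")
    case True
    then have "t*u > u*u" using \<open>u > 0\<close> by (simp add: mult_strict_right_mono)
    then show ?thesis using True \<open>u * u \<ge> M\<close> by simp
  next
    case False
    then have "t < u" "u = sqrt M" using assms unfolding u_def by (auto simp: max_def split: if_splits)
    have "t*u < u*u" using \<open>t < u\<close> \<open>u > 0\<close> by (rule mult_strict_right_mono)
    also have "u*u = M" using \<open>u = sqrt M\<close> \<open>0 < M\<close> by simp
    finally have "t*u < M" .
    then show ?thesis using \<open>t < u\<close> by (simp add: mult_neg_neg)
  qed
  moreover have "(t + M/t) - (u + M/u) = (t - u) * (t*u - M) / (t*u)"
    using \<open>u > 0\<close> \<open>t > 0\<close> by (simp add: field_simps)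
  ultimately show ?thesis using \<open>u > 0\<close> \<open>t > 0\<close> unfolding u_def
    by (smt (verit) divide_pos_pos mult_pos_pos)
qed

definition unit_best_response :: "real \<Rightarrow> real \<Rightarrow> real \<Rightarrow> real" where
  "unit_best_response lam \<beta> \<gamma> =
     (max (1 - lam - \<gamma>) (sqrt ((1 - lam) * (1 - lam - \<beta>))) - (1 - lam - \<gamma>)) / \<gamma>"

lemma unit_best_response_mem:
  assumes "0 < \<gamma>" "\<gamma> \<le> \<beta>" "\<beta> < 1 - lam"
  shows "unit_best_response lam \<beta> \<gamma> \<in> {0..1}"
proof -
  have "(1 - lam) * (1 - lam - \<beta>) < (1 - lam)\<^sup>2"
    using assms by (simp add: power2_eq_square)
  then have "sqrt ((1 - lam) * (1 - lam - \<beta>)) < 1 - lam"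
    using assms by (intro real_less_lsqrt) auto
  then show ?thesis
    using assms unfolding unit_best_response_def by (auto simp: divide_le_eq_1)
qed

lemma unit_best_response_eq:
  assumes "0 < \<gamma>" "\<gamma> < 1 - lam"
  shows "unit_best_response lam \<beta> \<gamma> =
    (if \<beta> - lam*\<beta> + (lam + \<gamma> + lam - 2)*\<gamma> \<ge> 0 then 0
     else (lam + \<gamma> - 1 + sqrt (1 - \<beta> + (lam + \<gamma> + \<beta> - 2)*lam - lam*\<gamma>)) / \<gamma>)"
proof -
  define b where "b = 1 - lam - \<gamma>"
  define M where "M = (1 - lam) * (1 - lam - \<beta>)"
  have "\<beta> - lam*\<beta> + (lam + \<gamma> + lam - 2)*\<gamma> = b\<^sup>2 - M"
    unfolding b_def M_def by (simp add: algebra_simps power2_eq_square)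
  moreover have "b\<^sup>2 - M \<ge> 0 \<longleftrightarrow> sqrt M \<le> b"
    using assms real_le_lsqrt sqrt_le_D unfolding b_def by fastforce
  moreover have "1 - \<beta> + (lam + \<gamma> + \<beta> - 2)*lam - lam*\<gamma> = M"
    unfolding M_def by (simp add: algebra_simps)
  ultimately show ?thesis
    unfolding unit_best_response_def b_def[symmetric] M_def[symmetric] by (auto simp: max_def b_def)
qed

lemma steady_f_unit_best_response_strict_min:
  fixes n :: nat and W :: "real mat" and c s :: "real vec" and lam \<beta> \<gamma> g :: real
  assumes C_pos: "(\<Sum>j<n. c $ j) > 0" and s_one: "\<forall>i<n. s $ i = 1"
    and chi: "chi_val n W c s = lam"
    and "0 < \<gamma>" "\<gamma> \<le> \<beta>" "\<beta> < 1 - lam"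
    and g: "g \<in> {0..1}" "g \<noteq> unit_best_response lam \<beta> \<gamma>"
  shows "steady_f n W c lam \<beta> \<gamma> s (unit_best_response lam \<beta> \<gamma>) 1 < steady_f n W c lam \<beta> \<gamma> s g 1"
proof -
  define C where "C = (\<Sum>j<n. c $ j)"
  define b where "b = 1 - lam - \<gamma>"
  define M where "M = (1 - lam) * (1 - lam - \<beta>)"
  define g0 where "g0 = unit_best_response lam \<beta> \<gamma>"
  have "b > 0" "M > 0" using assms unfolding b_def M_def by auto
  have "g0 \<in> {0..1}" unfolding g0_def using assms by (intro unit_best_response_mem)
  have payoff: "steady_f n W c lam \<beta> \<gamma> s x 1
      = C * ((b + x*\<gamma> + M / (b + x*\<gamma>)) / \<gamma> + (\<beta> - \<gamma> - 2*b) / \<gamma>)"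
    if "x \<ge> 0" for x
  proof -
    have "(\<Sum>j<n. c $ j) \<noteq> 0" using C_pos by simp
    moreover have "1 - lam - \<gamma> + x*\<gamma> > 0"
      using that \<open>b > 0\<close> \<open>0 < \<gamma>\<close> unfolding b_def by (simp add: add_pos_nonneg)
    ultimately show ?thesis
      unfolding C_def b_def M_def by (rule steady_f_unit_opinions[OF _ s_one chi \<open>0 < \<gamma>\<close>])
  qed
  have "b + g0*\<gamma> = max b (sqrt M)"
    unfolding g0_def unit_best_response_def b_def M_def using \<open>0 < \<gamma>\<close> by simp
  moreover have "b + g*\<gamma> \<noteq> b + g0*\<gamma>" using g \<open>0 < \<gamma>\<close> unfolding g0_def by simp
  ultimately show ?thesis
    using plus_inverse_unique_min_above[OF \<open>b > 0\<close> \<open>M > 0\<close>, of "b + g*\<gamma>"] g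
      payoff[of g] payoff[of g0] \<open>g0 \<in> {0..1}\<close> C_pos \<open>0 < \<gamma>\<close>
    unfolding C_def g0_def by (simp add: divide_strict_right_mono)
qed

lemma nash_eq_set_singleton_strategy:
  assumes "g0 \<in> G" and strict_min: "\<And>g. g \<in> G \<Longrightarrow> g \<noteq> g0 \<Longrightarrow> f g0 h < f g h"
  shows "{p. nash_eq f G {h} p} = {(g0, h)}"
proof -
  have "nash_eq f G {h} p \<longleftrightarrow> p = (g0, h)" for p
  proof
    assume "nash_eq f G {h} p"
    then have "fst p \<in> G" "snd p = h" "\<forall>g\<in>G. f (fst p) h \<le> f g h"
      unfolding nash_eq_def by auto
    then have "fst p = g0" using assms by (metis not_less)
    then show "p = (g0, h)" using \<open>snd p = h\<close> by (cases p) auto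
  next
    assume "p = (g0, h)"
    then show "nash_eq f G {h} p"
      unfolding nash_eq_def using assms by (auto intro: less_imp_le)
  qed
  then show ?thesis by auto
qed

theorem corollary5:
  fixes n :: nat and W :: "real mat" and c :: "real vec" and s :: "real vec"
    and lam \<beta> \<gamma> :: real
  assumes n_pos: "n > 0"
    and W_carrier: "W \<in> carrier_mat n n"
    and W_nonneg: "\<forall>i<n. \<forall>j<n. W $$ (i,j) \<ge> 0"
    and W_diag: "\<forall>i<n. W $$ (i,i) = 0"
    and lam_def: "lam = spectral_radius (map_mat complex_of_real W)"
    and c_dim: "dim_vec c = n"
    and c_pos: "\<forall>i<n. c $ i > 0"
    and c_eig: "transpose_mat W *\<^sub>v c = lam \<cdot>\<^sub>v c"
    and beta_gamma: "\<beta> \<ge> \<gamma>" and gamma_pos: "\<gamma> > 0"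
    and norm_cond: "1 - max (norm_inf_mat n W) (norm_one_mat n W) > max (2*\<beta>) (4*\<gamma>)"
    and s_dim: "dim_vec s = n"
    and s_one: "\<forall>i<n. s $ i = 1"
  defines "f \<equiv> steady_f n W c lam \<beta> \<gamma> s"
    and "G \<equiv> {0 .. Min ((\<lambda>i. s $ i) ` {..<n})}"
    and "H \<equiv> {Max ((\<lambda>i. s $ i) ` {..<n}) .. 1}"
    and "m11 \<equiv> (chi_val n W c s)*\<gamma> + \<beta> - \<beta>*lam - lam*\<gamma>"
    and "m01 \<equiv> \<beta> - lam*\<beta> + (lam + \<gamma> + chi_val n W c s - 2)*\<gamma>"
    and "w1 \<equiv> (lam + \<gamma> - 1 + sqrt (1 - \<beta> + (lam + \<gamma> + \<beta> - 2)*lam - (chi_val n W c s)*\<gamma>)) / \<gamma>"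
  shows "{p. nash_eq f G H p} =
           (if m01 \<ge> 0 then {(0, 1)} else if m11 \<le> 0 then {(1, 1)} else {(w1, 1)})"
proof -
  have chi: "chi_val n W c s = lam"
    by (rule chi_val_unit_opinions[OF n_pos W_carrier c_dim c_pos c_eig s_one])
  have "lam \<le> norm_inf_mat n W"
    by (rule positive_left_eigenvalue_le_norm_inf[OF n_pos W_carrier W_nonneg c_dim c_pos c_eig])
  then have "\<beta> < 1 - lam" "\<gamma> < 1 - lam" using norm_cond gamma_pos by auto
  have "(\<Sum>j<n. c $ j) > 0" using c_pos n_pos by (intro sum_pos) auto
  have "(\<lambda>i. s $ i) ` {..<n} = {1}" using s_one n_pos by auto
  then have G_eq: "G = {0..1}" and H_eq: "H = {1}" unfolding G_def H_def by simp_all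
  have "{p. nash_eq f G H p} = {(unit_best_response lam \<beta> \<gamma>, 1)}"
    unfolding f_def G_eq H_eq
  proof (rule nash_eq_set_singleton_strategy)
    show "unit_best_response lam \<beta> \<gamma> \<in> {0..1}"
      using gamma_pos beta_gamma \<open>\<beta> < 1 - lam\<close> by (rule unit_best_response_mem)
  qed (rule steady_f_unit_best_response_strict_min[OF \<open>(\<Sum>j<n. c $ j) > 0\<close> s_one chi
        gamma_pos beta_gamma \<open>\<beta> < 1 - lam\<close>])
  moreover have "m11 > 0"
    using \<open>\<beta> < 1 - lam\<close> beta_gamma gamma_pos unfolding m11_def chi by (simp add: algebra_simps)
  ultimately show ?thesis
    unfolding m01_def w1_def chi unit_best_response_eq[OF gamma_pos \<open>\<gamma> < 1 - lam\<close>] by auto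
qed

end
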